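(* Let $X\subset\Gamma$ be finite and such that $\mathbb N\ni n\mapsto|\underline X_n\setminus\underline X_{n-1}|$ is non-increasing. Let $R\in\mathbb N$, $\rho=\lfloor R/2\rfloor$, and $\Lambda\subset\Gamma$ finite with $\overline X^R\subset\Lambda$. Define $K(t):=-\sum_{Z\subset\Lambda:\ Z\cap X\ne\emptyset,\ Z\cap(\Lambda\setminus X)\neq\emptyset}\Psi(Z,t)$. Then $$\sup_{r\in[-T,T]}\|K(r)+S(R,r)\|\le 2|\partial X|\,\|\Psi\|_\xi\,\|F\|\,\zeta(\rho).$$
   Context: Setting. $\Gamma$ is a countable set with a graph distance $d(x,y)\ge 0$ (integer-valued). $F:[0,\infty)\to(0,\infty)$ satisfies $\|F\|:=\sup_{x\in\Gamma}\sum_{y\in\Gamma}F(d(x,y))<\infty$ and $C_F:=\sup_{x,z}\sum_{y}\frac{F(d(x,y))F(d(y,z))}{F(d(x,z))}<\infty$. $\xi:[0,\infty)\to(0,\infty)$ is non-increasing, satisfies $\xi(a+b)\ge\xi(a)\xi(b)$, and $\lim_{r\to\infty}\xi(r)r^n=0$ for all $n\in\mathbb N$. Put $F_\xi(r):=F(r)\xi(r)$ and $\zeta(R):=\sum_{r\in\mathbb N,\ r\ge R+1}\xi(r)$ for $R\in\mathbb N\cup\{0\}$. Each $x\in\Gamma$ carries a finite-dimensional Hilbert space $\mathcal H_x$; for finite $\Lambda$, $\mathcal A_\Lambda=\mathcal B(\bigotimes_{x\in\Lambda}\mathcal H_x)$, embedded in $\mathcal A_{\Lambda'}$ for $\Lambda\subset\Lambda'$.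 Fix $T>0$. An interaction assigns to each finite $Z\subset\Gamma$ and $t\in[-T,T]$ a self-adjoint $\Psi(Z,t)\in\mathcal A_Z$, continuous in $t$, with $\|\Psi\|_\xi:=\sup_{x,y\in\Gamma}\frac{1}{F_\xi(d(x,y))}\sum_{Z\ni x,y}\sup_{t\in[-T,T]}\|\Psi(Z,t)\|<\infty$. Sets. For finite $X$: $\partial X:=\{x\in X: d(x,\Gamma\setminus X)=1\}$; for $R\in\mathbb N\cup\{0\}$, $\overline X^R:=\{x\in\Gamma:d(x,X)\le R\}$, $\underline X_R:=\{x\in\Gamma: d(x,\Gamma\setminus X)\le R\}$, $\partial_RX:=\overline X^R\cap\underline X_R$. Surface energy. For $R\in\mathbb N$, $\rho=\lfloor R/2\rfloor$, finite $\Lambda\supset\overline X^R$: $M_R:=\{Y\subset\partial_{\rho}X: Y\cap X\ne\emptyset,\ Y\cap(\Lambda\setminus X)\ne\emptyset\}$ and $S(R,t):=\sum_{Z\in M_R}\Psi(Z,t)$. *)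

theory Defs
  imports "HOL-Analysis.Analysis" "HOL-Library.Extended_Nat"
begin

text \<open>The graph is given by a symmetric edge relation E; the graph distance is the
length of a shortest walk. The graph is assumed connected, so distances are finite.\<close>

definition gdist :: "('a \<times> 'a) set \<Rightarrow> 'a \<Rightarrow> 'a \<Rightarrow> nat" where
  "gdist E x y = (LEAST n. (x, y) \<in> E ^^ n)"

definition connected_graph :: "('a \<times> 'a) set \<Rightarrow> bool" where
  "connected_graph E \<longleftrightarrow> sym E \<and> (\<forall>x y. \<exists>n. (x, y) \<in> E ^^ n)"

text \<open>Distance from a point to a set, with the convention d(x, empty) = infinity.\<close>

definition setdist :: "('a \<Rightarrow> 'a \<Rightarrow> nat) \<Rightarrow> 'a \<Rightarrow> 'a set \<Rightarrow> enat" where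
  "setdist d x A = (INF y\<in>A. enat (d x y))"

definition bdry :: "('a \<Rightarrow> 'a \<Rightarrow> nat) \<Rightarrow> 'a set \<Rightarrow> 'a set" where
  "bdry d X = {x\<in>X. setdist d x (- X) = 1}"

definition outerR :: "('a \<Rightarrow> 'a \<Rightarrow> nat) \<Rightarrow> 'a set \<Rightarrow> nat \<Rightarrow> 'a set" where
  "outerR d X R = {x. setdist d x X \<le> enat R}"

definition innerR :: "('a \<Rightarrow> 'a \<Rightarrow> nat) \<Rightarrow> 'a set \<Rightarrow> nat \<Rightarrow> 'a set" where
  "innerR d X R = {x. setdist d x (- X) \<le> enat R}"

definition bdryR :: "('a \<Rightarrow> 'a \<Rightarrow> nat) \<Rightarrow> 'a set \<Rightarrow> nat \<Rightarrow> 'a set" where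
  "bdryR d X R = outerR d X R \<inter> innerR d X R"

definition normF :: "(real \<Rightarrow> real) \<Rightarrow> ('a \<Rightarrow> 'a \<Rightarrow> nat) \<Rightarrow> real" where
  "normF F d = (SUP x. (\<Sum>\<^sub>\<infinity>y. F (real (d x y))))"

definition CF :: "(real \<Rightarrow> real) \<Rightarrow> ('a \<Rightarrow> 'a \<Rightarrow> nat) \<Rightarrow> real" where
  "CF F d = (SUP (x, z). (\<Sum>\<^sub>\<infinity>y. F (real (d x y)) * F (real (d y z)) / F (real (d x z))))"

definition Fxi :: "(real \<Rightarrow> real) \<Rightarrow> (real \<Rightarrow> real) \<Rightarrow> real \<Rightarrow> real" where
  "Fxi F \<xi> r = F r * \<xi> r"

definition zeta :: "(real \<Rightarrow> real) \<Rightarrow> nat \<Rightarrow> real" where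
  "zeta \<xi> R = (\<Sum>\<^sub>\<infinity>r\<in>{R+1..}. \<xi> (real r))"

definition psup :: "real \<Rightarrow> ('a set \<Rightarrow> real \<Rightarrow> 'b::real_normed_vector) \<Rightarrow> 'a set \<Rightarrow> real" where
  "psup T \<Psi> Z = (SUP t\<in>{-T..T}. norm (\<Psi> Z t))"

definition psi_sum :: "real \<Rightarrow> ('a set \<Rightarrow> real \<Rightarrow> 'b::real_normed_vector) \<Rightarrow> 'a \<Rightarrow> 'a \<Rightarrow> real" where
  "psi_sum T \<Psi> x y = (\<Sum>\<^sub>\<infinity>Z\<in>{Z. finite Z \<and> x \<in> Z \<and> y \<in> Z}. psup T \<Psi> Z)"

definition normPsi :: "real \<Rightarrow> (real \<Rightarrow> real) \<Rightarrow> (real \<Rightarrow> real) \<Rightarrow> ('a \<Rightarrow> 'a \<Rightarrow> nat)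
     \<Rightarrow> ('a set \<Rightarrow> real \<Rightarrow> 'b::real_normed_vector) \<Rightarrow> real" where
  "normPsi T F \<xi> d \<Psi> = (SUP (x, y). psi_sum T \<Psi> x y / Fxi F \<xi> (real (d x y)))"

definition MR :: "('a \<Rightarrow> 'a \<Rightarrow> nat) \<Rightarrow> 'a set \<Rightarrow> 'a set \<Rightarrow> nat \<Rightarrow> 'a set set" where
  "MR d X \<Lambda> R = {Y. Y \<subseteq> bdryR d X (R div 2) \<and> Y \<inter> X \<noteq> {} \<and> Y \<inter> (\<Lambda> - X) \<noteq> {}}"

definition S :: "('a \<Rightarrow> 'a \<Rightarrow> nat) \<Rightarrow> 'a set \<Rightarrow> 'a set \<Rightarrow> ('a set \<Rightarrow> real \<Rightarrow> 'b::real_normed_vector)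
     \<Rightarrow> nat \<Rightarrow> real \<Rightarrow> 'b" where
  "S d X \<Lambda> \<Psi> R t = (\<Sum>Z\<in>MR d X \<Lambda> R. \<Psi> Z t)"

definition K :: "'a set \<Rightarrow> 'a set \<Rightarrow> ('a set \<Rightarrow> real \<Rightarrow> 'b::real_normed_vector) \<Rightarrow> real \<Rightarrow> 'b" where
  "K X \<Lambda> \<Psi> t = - (\<Sum>Z\<in>{Z. Z \<subseteq> \<Lambda> \<and> Z \<inter> X \<noteq> {} \<and> Z \<inter> (\<Lambda> - X) \<noteq> {}}. \<Psi> Z t)"

end

theory Submission
  imports Defs
begin

text \<open>K(t) + S(R,t) is minus the sum of \<Psi>(Z,t) over the sets Z \<subseteq> \<Lambda> meeting both X and \<Lambda> - X
  that are not contained in the surface layer \<partial>_\<rho> X. Such a Z contains a point a \<in> X and a point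
  b \<notin> X such that either a lies deeper than \<rho> inside X, or b lies farther than \<rho> outside X; in the
  latter case a geodesic from a to b crosses the boundary, so d(a,b) \<ge> d(a, \<Gamma> - X) + \<rho>.
  The sets containing a fixed pair contribute at most \<parallel>\<Psi>\<parallel>_\<xi> F(d(a,b)) \<xi>(d(a,b)); summing F over b
  costs \<parallel>F\<parallel>, and summing \<xi> over a, layer by layer, costs |\<partial>X| \<zeta>(\<rho>), because the monotonicity
  hypothesis bounds every layer by the first one, which is \<partial>X. The two cases give the factor 2.\<close>

lemma gdist_le: "(x, y) \<in> E ^^ n \<Longrightarrow> gdist E x y \<le> n"
  unfolding gdist_def by (rule Least_le)

lemma relpow_gdist: "connected_graph E \<Longrightarrow> (x, y) \<in> E ^^ gdist E x y"
  unfolding gdist_def connected_graph_def by (meson LeastI_ex)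

lemma gdist_self [simp]: "gdist E x x = 0"
  using gdist_le[of x x 0 E] by simp

lemma gdist_eq_0_iff: "connected_graph E \<Longrightarrow> gdist E x y = 0 \<longleftrightarrow> x = y"
  using relpow_gdist[of E x y] by auto

lemma gdist_edge: "(x, y) \<in> E \<Longrightarrow> gdist E x y \<le> 1"
  by (rule gdist_le) simp

lemma gdist_triangle: "connected_graph E \<Longrightarrow> gdist E x z \<le> gdist E x y + gdist E y z"
  using relpow_gdist[of E x y] relpow_gdist[of E y z] by (intro gdist_le) (auto simp: relpow_add)

lemma relpow_converse_mem: "sym E \<Longrightarrow> (x, y) \<in> E ^^ n \<Longrightarrow> (y, x) \<in> E ^^ n"
proof (induction n arbitrary: y)
  case (Suc n)
  then obtain w where "(x, w) \<in> E ^^ n" "(w, y) \<in> E" by auto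
  with Suc have "(y, w) \<in> E" "(w, x) \<in> E ^^ n" by (auto dest: symD)
  then have "(y, x) \<in> E ^^ (1 + n)" unfolding relpow_add by auto
  then show ?case by simp
qed simp

lemma gdist_commute: "connected_graph E \<Longrightarrow> gdist E x y = gdist E y x"
  by (metis antisym connected_graph_def gdist_le relpow_gdist relpow_converse_mem)

lemma relpow_exit_edge:
  assumes "connected_graph E" "(x, z) \<in> E ^^ n" "x \<in> X" "z \<notin> X"
  shows "\<exists>u\<in>X. \<exists>v. v \<notin> X \<and> (u, v) \<in> E \<and> gdist E x u + 1 + gdist E v z \<le> n"
  using assms(2,4)
proof (induction n arbitrary: z)
  case 0
  with assms(3) show ?case by simp
next
  case (Suc n)
  then obtain w where w: "(x, w) \<in> E ^^ n" "(w, z) \<in> E" by auto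
  show ?case
  proof (cases "w \<in> X")
    case True
    with w Suc.prems gdist_le[OF w(1)] show ?thesis by force
  next
    case False
    from Suc.IH[OF w(1) False] obtain u v where uv: "u \<in> X" "v \<notin> X" "(u, v) \<in> E"
      "gdist E x u + 1 + gdist E v w \<le> n" by blast
    have "gdist E v z \<le> gdist E v w + 1"
      using gdist_triangle[OF assms(1), of v z w] gdist_edge[OF w(2)] by simp
    with uv show ?thesis by force
  qed
qed

lemma setdist_le: "y \<in> A \<Longrightarrow> setdist d x A \<le> enat (d x y)"
  unfolding setdist_def by (rule INF_lower)

lemma le_setdist: "(\<And>y. y \<in> A \<Longrightarrow> k \<le> d x y) \<Longrightarrow> enat k \<le> setdist d x A"
  unfolding setdist_def by (rule INF_greatest) simp

lemma setdist_eq_0: "d x x = 0 \<Longrightarrow> x \<in> A \<Longrightarrow> setdist d x A = 0"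
  using setdist_le[of x A d x] by (metis le_zero_eq zero_enat_def)

lemma setdist_compl_add_setdist_le:
  assumes E: "connected_graph E" and "x \<in> X" "z \<notin> X"
  shows "setdist (gdist E) x (-X) + setdist (gdist E) z X \<le> enat (gdist E x z) + 1"
proof -
  obtain u v where "u \<in> X" "v \<notin> X" "(u, v) \<in> E" and uv: "gdist E x u + 1 + gdist E v z \<le> gdist E x z"
    using relpow_exit_edge[OF E relpow_gdist[OF E] assms(2,3)] by blast
  then have "setdist (gdist E) x (-X) \<le> enat (gdist E x u + 1)"
    using setdist_le[of v "-X" "gdist E" x] gdist_triangle[OF E, of x v u] gdist_edge[of u v E]
    by (auto intro: order.trans)
  moreover have "setdist (gdist E) z X \<le> enat (gdist E v z + 1)"
    using \<open>u \<in> X\<close> setdist_le[of u X "gdist E" z] gdist_triangle[OF E, of z u v] gdist_edge[of u v E]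
      gdist_commute[OF E, of z v] gdist_commute[OF E, of v u] \<open>(u, v) \<in> E\<close>
    by (auto intro: order.trans)
  ultimately have "setdist (gdist E) x (-X) + setdist (gdist E) z X \<le> enat (gdist E x u + 1 + (gdist E v z + 1))"
    by (metis add_mono plus_enat_simps(1))
  also have "\<dots> \<le> enat (gdist E x z) + 1"
    using uv by (simp add: one_enat_def)
  finally show ?thesis .
qed

lemma innerR_diff_eq_layer:
  assumes "n \<ge> 1"
  shows "innerR d X n - innerR d X (n - 1) = {x. setdist d x (-X) = enat n}"
proof -
  from assms have "(a \<le> enat n \<and> \<not> a \<le> enat (n - 1)) \<longleftrightarrow> a = enat n" for a
    by (cases a) auto
  then show ?thesis unfolding innerR_def by auto
qed

lemma layer_subset:
  assumes "\<And>x. d x x = 0" "n \<ge> 1"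
  shows "{x. setdist d x (-X) = enat n} \<subseteq> X"
  using assms setdist_eq_0[of d _ "-X"] by (fastforce simp: zero_enat_def)

lemma card_layer_le_card_bdry:
  fixes d :: "'a \<Rightarrow> 'a \<Rightarrow> nat"
  assumes refl: "\<And>x. d x x = 0" and "finite X"
    and layers: "\<And>n. n \<ge> 1 \<Longrightarrow>
        card (innerR d X (n + 1) - innerR d X n) \<le> card (innerR d X n - innerR d X (n - 1))"
    and "n \<ge> 1"
  shows "card {x. setdist d x (-X) = enat n} \<le> card (bdry d X)"
proof -
  have "card {x. setdist d x (-X) = enat (Suc m)} \<le> card (bdry d X)" for m
  proof (induction m)
    case 0
    have "bdry d X = {x. setdist d x (-X) = enat 1}"
      unfolding bdry_def using layer_subset[where d = d and n = 1 and X = X, OF refl] by (auto simp: one_enat_def)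
    then show ?case by simp
  next
    case (Suc m)
    with layers[of "Suc m"] innerR_diff_eq_layer[of "Suc (Suc m)" d X] innerR_diff_eq_layer[of "Suc m" d X]
    show ?case by simp
  qed
  from this[of "n - 1"] \<open>n \<ge> 1\<close> show ?thesis by simp
qed

lemma sum_le_sum_covering_pairs:
  fixes p :: "'a \<Rightarrow> real"
  assumes "finite A" "finite P" "\<And>Z. Z \<in> A \<Longrightarrow> p Z \<ge> 0"
    and cover: "\<And>Z. Z \<in> A \<Longrightarrow> \<exists>q\<in>P. r q Z"
  shows "(\<Sum>Z\<in>A. p Z) \<le> (\<Sum>q\<in>P. \<Sum>Z\<in>{Z\<in>A. r q Z}. p Z)"
proof -
  have "(\<Sum>Z\<in>A. p Z) \<le> (\<Sum>Z\<in>A. \<Sum>q\<in>P. if r q Z then p Z else 0)"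
  proof (rule sum_mono)
    fix Z assume "Z \<in> A"
    with cover obtain q where "q \<in> P" "r q Z" by blast
    with \<open>Z \<in> A\<close> assms(2,3) show "p Z \<le> (\<Sum>q\<in>P. if r q Z then p Z else 0)"
      using member_le_sum[of q P "\<lambda>q. if r q Z then p Z else 0"] by auto
  qed
  also have "\<dots> = (\<Sum>q\<in>P. \<Sum>Z\<in>{Z\<in>A. r q Z}. p Z)"
    using assms(1) by (simp add: sum.swap[of _ A] sum.inter_filter)
  finally show ?thesis .
qed

lemma sum_comp_le_fibre_card_mult_sum_image:
  fixes h :: "'b \<Rightarrow> real"
  assumes "finite A" "\<And>n. card {x\<in>A. g x = n} \<le> c" "\<And>n. h n \<ge> 0"
  shows "(\<Sum>x\<in>A. h (g x)) \<le> real c * (\<Sum>n\<in>g ` A. h n)"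
proof -
  have "(\<Sum>x\<in>A. h (g x)) = (\<Sum>n\<in>g ` A. real (card {x\<in>A. g x = n}) * h n)"
    by (subst sum.image_gen[OF assms(1)]) (auto intro: sum.cong)
  also have "\<dots> \<le> (\<Sum>n\<in>g ` A. real c * h n)"
    using assms(2,3) by (intro sum_mono mult_right_mono) auto
  finally show ?thesis by (simp add: sum_distrib_left)
qed

lemma summable_on_nat_if_decay:
  fixes \<xi> :: "real \<Rightarrow> real"
  assumes pos: "\<And>r. r \<ge> 0 \<Longrightarrow> \<xi> r > 0"
    and decay: "((\<lambda>r. \<xi> r * r ^ 2) \<longlongrightarrow> 0) at_top"
  shows "(\<lambda>n::nat. \<xi> (real n)) summable_on UNIV"
proof -
  have "eventually (\<lambda>r. \<xi> r * r ^ 2 < 1) at_top"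
    using order_tendstoD(2)[OF decay] by simp
  then have "eventually (\<lambda>n::nat. \<xi> (real n) * real n ^ 2 < 1) sequentially"
    using filterlim_real_sequentially by (rule eventually_compose_filterlim)
  then have "eventually (\<lambda>n::nat. norm (\<xi> (real n)) \<le> inverse (real n ^ 2)) sequentially"
    using eventually_gt_at_top[of "0::nat"]
    by eventually_elim (use pos in \<open>auto simp: field_simps less_imp_le\<close>)
  then have "summable (\<lambda>n::nat. \<xi> (real n))"
    by (rule summable_comparison_test_ev) (rule inverse_power_summable, simp)
  then show ?thesis
    by (rule summable_nonneg_imp_summable_on) (simp add: less_imp_le pos)
qed

lemma off_surface_contains_far_pair:
  assumes refl: "\<And>x. d x x = 0"
    and Z: "Z \<subseteq> \<Lambda>" "Z \<inter> X \<noteq> {}" "Z \<inter> (\<Lambda> - X) \<noteq> {}" "\<not> Z \<subseteq> bdryR d X \<rho>"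
  shows "\<exists>(a, b) \<in> {z\<in>X. enat \<rho> < setdist d z (-X)} \<times> (\<Lambda> - X) \<union> X \<times> {z\<in>\<Lambda> - X. enat \<rho> < setdist d z X}.
           a \<in> Z \<and> b \<in> Z"
proof -
  obtain w where w: "w \<in> Z" "w \<notin> bdryR d X \<rho>" using Z(4) by blast
  show ?thesis
  proof (cases "w \<in> X")
    case True
    then have "w \<in> outerR d X \<rho>"
      unfolding outerR_def using setdist_eq_0[of d w, OF refl] by simp
    with w True have "enat \<rho> < setdist d w (-X)"
      unfolding bdryR_def innerR_def by (simp add: not_le)
    with True w(1) Z(3) show ?thesis by blast
  next
    case False
    then have "w \<in> innerR d X \<rho>"
      unfolding innerR_def using setdist_eq_0[of d w, OF refl] by simp
    with w have "enat \<rho> < setdist d w X"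
      unfolding bdryR_def outerR_def by (simp add: not_le)
    with False w(1) Z(1,2) show ?thesis by blast
  qed
qed

lemma K_add_S_eq:
  assumes "finite \<Lambda>" "outerR d X R \<subseteq> \<Lambda>"
  shows "K X \<Lambda> \<Psi> t + S d X \<Lambda> \<Psi> R t
    = - (\<Sum>Z\<in>{Z. Z \<subseteq> \<Lambda> \<and> Z \<inter> X \<noteq> {} \<and> Z \<inter> (\<Lambda> - X) \<noteq> {} \<and> \<not> Z \<subseteq> bdryR d X (R div 2)}. \<Psi> Z t)"
proof -
  define C where "C = {Z. Z \<subseteq> \<Lambda> \<and> Z \<inter> X \<noteq> {} \<and> Z \<inter> (\<Lambda> - X) \<noteq> {}}"
  have "bdryR d X (R div 2) \<subseteq> \<Lambda>"
    using assms(2) order.trans[of _ "enat (R div 2)" "enat R"] unfolding bdryR_def outerR_def by auto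
  then have M: "MR d X \<Lambda> R \<subseteq> C" and D: "C - MR d X \<Lambda> R = {Z\<in>C. \<not> Z \<subseteq> bdryR d X (R div 2)}"
    unfolding MR_def C_def by auto
  have "finite C"
    using assms(1) by (auto simp: C_def intro: finite_subset[of _ "Pow \<Lambda>"])
  from sum.subset_diff[OF M this, of "\<lambda>Z. \<Psi> Z t"] D show ?thesis
    unfolding K_def S_def C_def by simp
qed

locale decaying_interaction =
  fixes E :: "('a \<times> 'a) set" and F \<xi> :: "real \<Rightarrow> real" and T :: real
    and \<Psi> :: "'a set \<Rightarrow> real \<Rightarrow> 'b::real_normed_vector"
  assumes graph: "connected_graph E"
    and F_pos: "\<And>r. r \<ge> 0 \<Longrightarrow> F r > 0"
    and F_summ: "\<And>x. (\<lambda>y. F (real (gdist E x y))) summable_on UNIV"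
    and F_bdd: "bdd_above (range (\<lambda>x. \<Sum>\<^sub>\<infinity>y. F (real (gdist E x y))))"
    and xi_pos: "\<And>r. r \<ge> 0 \<Longrightarrow> \<xi> r > 0"
    and xi_mono: "\<And>a b. 0 \<le> a \<Longrightarrow> a \<le> b \<Longrightarrow> \<xi> b \<le> \<xi> a"
    and xi_summ: "(\<lambda>n::nat. \<xi> (real n)) summable_on UNIV"
    and T_nonneg: "T \<ge> 0"
    and Psi_cont: "\<And>Z. finite Z \<Longrightarrow> continuous_on {-T..T} (\<Psi> Z)"
    and Psi_summ: "\<And>x y. (psup T \<Psi>) summable_on {Z. finite Z \<and> x \<in> Z \<and> y \<in> Z}"
    and Psi_bdd: "bdd_above ((\<lambda>(x, y). psi_sum T \<Psi> x y / Fxi F \<xi> (real (gdist E x y))) ` UNIV)"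
begin

lemma norm_le_psup:
  assumes "finite Z" "t \<in> {-T..T}"
  shows "norm (\<Psi> Z t) \<le> psup T \<Psi> Z"
proof -
  have "compact ((\<lambda>t. norm (\<Psi> Z t)) ` {-T..T})"
    using Psi_cont[OF assms(1)] by (intro compact_continuous_image continuous_on_norm) auto
  then have "bdd_above ((\<lambda>t. norm (\<Psi> Z t)) ` {-T..T})"
    by (auto intro: bounded_imp_bdd_above compact_imp_bounded)
  then show ?thesis unfolding psup_def by (rule cSUP_upper[OF assms(2)])
qed

lemma psup_nonneg: "finite Z \<Longrightarrow> 0 \<le> psup T \<Psi> Z"
  using norm_le_psup[of Z 0] T_nonneg by (auto intro: order.trans[OF norm_ge_zero])

lemma Fxi_pos: "Fxi F \<xi> (real n) > 0"
  using F_pos xi_pos by (simp add: Fxi_def)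

lemma psi_sum_le: "psi_sum T \<Psi> a b \<le> normPsi T F \<xi> (gdist E) \<Psi> * Fxi F \<xi> (real (gdist E a b))"
proof -
  have "psi_sum T \<Psi> a b / Fxi F \<xi> (real (gdist E a b)) \<le> normPsi T F \<xi> (gdist E) \<Psi>"
    unfolding normPsi_def using cSUP_upper[OF UNIV_I Psi_bdd, of "(a, b)"] by simp
  with Fxi_pos show ?thesis by (simp add: divide_le_eq)
qed

lemma normPsi_nonneg: "0 \<le> normPsi T F \<xi> (gdist E) \<Psi>"
proof -
  have "0 \<le> psi_sum T \<Psi> a a" for a
    unfolding psi_sum_def by (auto intro: infsum_nonneg psup_nonneg)
  then have "0 \<le> normPsi T F \<xi> (gdist E) \<Psi> * Fxi F \<xi> (real (gdist E a a))" for a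
    using psi_sum_le[of a a] by (rule order.trans)
  moreover have "0 < Fxi F \<xi> (real (gdist E a a))" for a
    by (rule Fxi_pos)
  ultimately show ?thesis by (meson zero_le_mult_iff not_le)
qed

lemma sum_psup_containing_le:
  assumes "finite A" "\<And>Z. Z \<in> A \<Longrightarrow> finite Z"
  shows "(\<Sum>Z\<in>{Z\<in>A. a \<in> Z \<and> b \<in> Z}. psup T \<Psi> Z)
    \<le> normPsi T F \<xi> (gdist E) \<Psi> * Fxi F \<xi> (real (gdist E a b))"
proof -
  have "(\<Sum>Z\<in>{Z\<in>A. a \<in> Z \<and> b \<in> Z}. psup T \<Psi> Z) \<le> psi_sum T \<Psi> a b"
    unfolding psi_sum_def
    by (rule finite_sum_le_infsum[OF Psi_summ]) (use assms psup_nonneg in auto)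
  with psi_sum_le[of a b] show ?thesis by linarith
qed

lemma sum_F_le_normF:
  assumes "finite B"
  shows "(\<Sum>y\<in>B. F (real (gdist E x y))) \<le> normF F (gdist E)"
proof -
  have "(\<Sum>y\<in>B. F (real (gdist E x y))) \<le> (\<Sum>\<^sub>\<infinity>y. F (real (gdist E x y)))"
    by (rule finite_sum_le_infsum[OF F_summ assms]) (auto intro!: less_imp_le[OF F_pos])
  also have "\<dots> \<le> normF F (gdist E)"
    unfolding normF_def by (rule cSUP_upper[OF UNIV_I F_bdd])
  finally show ?thesis .
qed

lemma normF_nonneg: "0 \<le> normF F (gdist E)"
  using sum_F_le_normF[of "{}"] by simp

lemma sum_xi_le_zeta: "finite A \<Longrightarrow> A \<subseteq> {\<rho>+1..} \<Longrightarrow> (\<Sum>n\<in>A. \<xi> (real n)) \<le> zeta \<xi> \<rho>"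
  unfolding zeta_def
  by (rule finite_sum_le_infsum[OF summable_on_subset[OF xi_summ]]) (auto intro!: less_imp_le[OF xi_pos])

lemma zeta_nonneg: "0 \<le> zeta \<xi> \<rho>"
  using sum_xi_le_zeta[of "{}"] by simp

lemma sum_Fxi_le:
  assumes "finite B" "\<And>y. y \<in> B \<Longrightarrow> m \<le> gdist E x y"
  shows "(\<Sum>y\<in>B. Fxi F \<xi> (real (gdist E x y))) \<le> normF F (gdist E) * \<xi> (real m)"
proof -
  have "(\<Sum>y\<in>B. Fxi F \<xi> (real (gdist E x y))) \<le> (\<Sum>y\<in>B. F (real (gdist E x y)) * \<xi> (real m))"
    unfolding Fxi_def using assms(2) F_pos by (intro sum_mono mult_left_mono xi_mono) (auto intro: less_imp_le)
  also have "\<dots> \<le> normF F (gdist E) * \<xi> (real m)"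
    unfolding sum_distrib_right[symmetric]
    using sum_F_le_normF[OF assms(1)] xi_pos by (intro mult_right_mono) (auto intro: less_imp_le)
  finally show ?thesis .
qed

lemma sum_Fxi_pairs_le:
  fixes g :: "'a \<Rightarrow> nat"
  assumes "finite A" "finite B"
    and far: "\<And>x y. x \<in> A \<Longrightarrow> y \<in> B \<Longrightarrow> g x + k \<le> gdist E x y"
    and deep: "\<And>x. x \<in> A \<Longrightarrow> \<rho> < g x + k"
    and fibres: "\<And>n. card {x\<in>A. g x = n} \<le> c"
  shows "(\<Sum>(x, y)\<in>A \<times> B. Fxi F \<xi> (real (gdist E x y))) \<le> real c * normF F (gdist E) * zeta \<xi> \<rho>"
proof -
  have "(\<Sum>x\<in>A. \<xi> (real (g x + k))) \<le> real c * (\<Sum>n\<in>g ` A. \<xi> (real (n + k)))"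
    using sum_comp_le_fibre_card_mult_sum_image[OF assms(1) fibres, of "\<lambda>n. \<xi> (real (n + k))"] xi_pos
    by (simp add: less_imp_le)
  also have "(\<Sum>n\<in>g ` A. \<xi> (real (n + k))) = (\<Sum>m\<in>(\<lambda>n. n + k) ` g ` A. \<xi> (real m))"
    by (simp add: sum.reindex)
  also have "\<dots> \<le> zeta \<xi> \<rho>"
    using deep assms(1) by (intro sum_xi_le_zeta) fastforce+
  finally have xi_sum: "(\<Sum>x\<in>A. \<xi> (real (g x + k))) \<le> real c * zeta \<xi> \<rho>"
    by (simp add: mult_left_mono)
  have "(\<Sum>(x, y)\<in>A \<times> B. Fxi F \<xi> (real (gdist E x y))) = (\<Sum>x\<in>A. \<Sum>y\<in>B. Fxi F \<xi> (real (gdist E x y)))"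
    by (simp add: sum.cartesian_product)
  also have "\<dots> \<le> (\<Sum>x\<in>A. normF F (gdist E) * \<xi> (real (g x + k)))"
    using far by (intro sum_mono sum_Fxi_le assms(2)) auto
  also have "\<dots> \<le> normF F (gdist E) * (real c * zeta \<xi> \<rho>)"
    using xi_sum normF_nonneg by (simp add: sum_distrib_left[symmetric] mult_left_mono)
  finally show ?thesis by (simp add: mult_ac)
qed

lemma sum_psup_off_surface_le:
  assumes "finite X" "finite \<Lambda>"
    and layers: "\<And>n. n \<ge> 1 \<Longrightarrow> card (innerR (gdist E) X (n + 1) - innerR (gdist E) X n)
        \<le> card (innerR (gdist E) X n - innerR (gdist E) X (n - 1))"
  shows "(\<Sum>Z\<in>{Z. Z \<subseteq> \<Lambda> \<and> Z \<inter> X \<noteq> {} \<and> Z \<inter> (\<Lambda> - X) \<noteq> {} \<and> \<not> Z \<subseteq> bdryR (gdist E) X \<rho>}. psup T \<Psi> Z)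
    \<le> 2 * real (card (bdry (gdist E) X)) * normPsi T F \<xi> (gdist E) \<Psi> * normF F (gdist E) * zeta \<xi> \<rho>"
    (is "(\<Sum>Z\<in>?D. _) \<le> 2 * real ?c * ?N * ?nF * ?\<zeta>")
proof -
  define depth where "depth x = the_enat (setdist (gdist E) x (-X))" for x
  define X\<^sub>1 where "X\<^sub>1 = {z\<in>X. enat \<rho> < setdist (gdist E) z (-X)}"
  define X\<^sub>2 where "X\<^sub>2 = {z\<in>\<Lambda> - X. enat \<rho> < setdist (gdist E) z X}"
  define w where "w q = (\<Sum>Z\<in>{Z\<in>?D. fst q \<in> Z \<and> snd q \<in> Z}. psup T \<Psi> Z)" for q
  have fin_D: "finite ?D" and fin_Z: "\<And>Z. Z \<in> ?D \<Longrightarrow> finite Z"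
    using \<open>finite \<Lambda>\<close> by (auto intro: finite_subset[of _ "Pow \<Lambda>"] finite_subset)
  have fin: "finite X\<^sub>1" "finite X\<^sub>2"
    using assms(1,2) by (simp_all add: X\<^sub>1_def X\<^sub>2_def)
  have w_le: "w q \<le> ?N * Fxi F \<xi> (real (gdist E (fst q) (snd q)))" for q
    unfolding w_def using sum_psup_containing_le[OF fin_D fin_Z] by simp
  have w_nonneg: "0 \<le> w q" for q
    unfolding w_def using fin_Z by (auto intro!: sum_nonneg psup_nonneg)
  have depth: "setdist (gdist E) x (-X) = enat (depth x)" "1 \<le> depth x" if "x \<in> X" and out: "\<not> \<Lambda> \<subseteq> X" for x
  proof -
    obtain y where "y \<in> -X" using out by blast
    then show "setdist (gdist E) x (-X) = enat (depth x)"
      using setdist_le[of y "-X" "gdist E" x] unfolding depth_def by (cases "setdist (gdist E) x (-X)") auto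
    moreover have "enat 1 \<le> setdist (gdist E) x (-X)"
      using that(1) gdist_eq_0_iff[OF graph] by (intro le_setdist) (metis ComplD less_one not_le)
    ultimately show "1 \<le> depth x" by simp
  qed
  have fibres: "card {x\<in>A. depth x = n} \<le> ?c" if "A \<subseteq> X" "\<not> \<Lambda> \<subseteq> X" for A n
  proof (cases "n \<ge> 1")
    case True
    have "{x\<in>A. depth x = n} \<subseteq> {x. setdist (gdist E) x (-X) = enat n}"
      using that depth by auto
    then show ?thesis
      using card_layer_le_card_bdry[of "gdist E", OF gdist_self assms(1) layers True]
        layer_subset[of "gdist E", OF gdist_self True] assms(1)
      by (meson card_mono finite_subset order.trans)
  next
    case False
    with that depth have "{x\<in>A. depth x = n} = {}" by fastforce
    then show ?thesis by (metis card.empty le0)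
  qed
  have "(\<Sum>Z\<in>?D. psup T \<Psi> Z) \<le> (\<Sum>q\<in>X\<^sub>1 \<times> (\<Lambda> - X) \<union> X \<times> X\<^sub>2. w q)"
    unfolding w_def
  proof (rule sum_le_sum_covering_pairs)
    fix Z assume "Z \<in> ?D"
    then obtain a b where "(a, b) \<in> X\<^sub>1 \<times> (\<Lambda> - X) \<union> X \<times> X\<^sub>2" "a \<in> Z" "b \<in> Z"
      using off_surface_contains_far_pair[of "gdist E", OF gdist_self, of Z \<Lambda> X \<rho>]
      unfolding X\<^sub>1_def X\<^sub>2_def by blast
    then show "\<exists>q\<in>X\<^sub>1 \<times> (\<Lambda> - X) \<union> X \<times> X\<^sub>2. fst q \<in> Z \<and> snd q \<in> Z" by force
  qed (use fin assms(1,2) fin_D fin_Z psup_nonneg in auto)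
  also have "\<dots> \<le> (\<Sum>q\<in>X\<^sub>1 \<times> (\<Lambda> - X). w q) + (\<Sum>q\<in>X \<times> X\<^sub>2. w q)"
    using fin assms(1,2) w_nonneg by (simp add: sum_Un sum_nonneg)
  also have "\<dots> \<le> ?N * (\<Sum>(x, y)\<in>X\<^sub>1 \<times> (\<Lambda> - X). Fxi F \<xi> (real (gdist E x y)))
      + ?N * (\<Sum>(x, z)\<in>X \<times> X\<^sub>2. Fxi F \<xi> (real (gdist E x z)))"
    unfolding sum_distrib_left case_prod_beta using w_le
    by (intro add_mono sum_mono) auto
  also have "\<dots> \<le> ?N * (real ?c * ?nF * ?\<zeta>) + ?N * (real ?c * ?nF * ?\<zeta>)"
  proof (cases "\<Lambda> \<subseteq> X")
    case True
    then have empty: "X\<^sub>2 = {}" "\<Lambda> - X = {}" by (auto simp: X\<^sub>2_def)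
    show ?thesis using normPsi_nonneg normF_nonneg zeta_nonneg by (simp add: empty)
  next
    case False
    have "(\<Sum>(x, y)\<in>X\<^sub>1 \<times> (\<Lambda> - X). Fxi F \<xi> (real (gdist E x y))) \<le> real ?c * ?nF * ?\<zeta>"
    proof (rule sum_Fxi_pairs_le[where g = depth and k = 0])
      show "depth x + 0 \<le> gdist E x y" if "x \<in> X\<^sub>1" "y \<in> \<Lambda> - X" for x y
        using that depth[OF _ False, of x] setdist_le[of y "-X" "gdist E" x] by (simp add: X\<^sub>1_def)
      show "\<rho> < depth x + 0" if "x \<in> X\<^sub>1" for x
        using that depth[OF _ False, of x] by (simp add: X\<^sub>1_def)
    qed (use fin assms(2) fibres[OF _ False, of X\<^sub>1] in \<open>auto simp: X\<^sub>1_def\<close>)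
    moreover have "(\<Sum>(x, z)\<in>X \<times> X\<^sub>2. Fxi F \<xi> (real (gdist E x z))) \<le> real ?c * ?nF * ?\<zeta>"
    proof (rule sum_Fxi_pairs_le[where g = depth and k = \<rho>])
      show "depth x + \<rho> \<le> gdist E x z" if "x \<in> X" "z \<in> X\<^sub>2" for x z
      proof -
        have "enat (Suc \<rho>) \<le> setdist (gdist E) z X"
          using that(2) by (simp add: X\<^sub>2_def Suc_ile_eq)
        then have "enat (depth x) + enat (Suc \<rho>) \<le> enat (depth x) + setdist (gdist E) z X"
          by (rule add_left_mono)
        also have "\<dots> \<le> enat (gdist E x z) + 1"
          using that setdist_compl_add_setdist_le[OF graph, of x X z] depth[OF _ False, of x]
          by (simp add: X\<^sub>2_def)
        finally show ?thesis by (simp add: one_enat_def)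
      qed
      show "\<rho> < depth x + \<rho>" if "x \<in> X" for x
        using depth[OF that False] by simp
    qed (use fin assms(1) fibres[OF _ False] in auto)
    ultimately show ?thesis using normPsi_nonneg by (intro add_mono mult_left_mono)
  qed
  finally show ?thesis by (simp add: algebra_simps)
qed

end

theorem mainTheorem2:
  fixes E :: "('a::countable \<times> 'a) set"
    and F \<xi> :: "real \<Rightarrow> real"
    and T :: real
    and \<Psi> :: "'a set \<Rightarrow> real \<Rightarrow> 'b::real_normed_vector"
    and X \<Lambda> :: "'a set"
    and R :: nat
  defines "d \<equiv> gdist E"
  assumes graph: "connected_graph E"
    and F_pos: "\<And>r. r \<ge> 0 \<Longrightarrow> F r > 0"
    and F_summ: "\<And>x. (\<lambda>y. F (real (d x y))) summable_on UNIV"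
    and F_bdd: "bdd_above (range (\<lambda>x. \<Sum>\<^sub>\<infinity>y. F (real (d x y))))"
    and CF_summ: "\<And>x z. (\<lambda>y. F (real (d x y)) * F (real (d y z)) / F (real (d x z))) summable_on UNIV"
    and CF_bdd: "bdd_above ((\<lambda>(x, z). \<Sum>\<^sub>\<infinity>y. F (real (d x y)) * F (real (d y z)) / F (real (d x z))) ` UNIV)"
    and xi_pos: "\<And>r. r \<ge> 0 \<Longrightarrow> \<xi> r > 0"
    and xi_mono: "\<And>a b. 0 \<le> a \<Longrightarrow> a \<le> b \<Longrightarrow> \<xi> b \<le> \<xi> a"
    and xi_supermult: "\<And>a b. 0 \<le> a \<Longrightarrow> 0 \<le> b \<Longrightarrow> \<xi> (a + b) \<ge> \<xi> a * \<xi> b"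
    and xi_decay: "\<And>n::nat. ((\<lambda>r. \<xi> r * r ^ n) \<longlongrightarrow> 0) at_top"
    and T_pos: "T > 0"
    and Psi_cont: "\<And>Z. finite Z \<Longrightarrow> continuous_on {-T..T} (\<Psi> Z)"
    and Psi_summ: "\<And>x y. (psup T \<Psi>) summable_on {Z. finite Z \<and> x \<in> Z \<and> y \<in> Z}"
    and Psi_bdd: "bdd_above ((\<lambda>(x, y). psi_sum T \<Psi> x y / Fxi F \<xi> (real (d x y))) ` UNIV)"
    and X_fin: "finite X"
    and layers: "\<And>n. n \<ge> 1 \<Longrightarrow>
        card (innerR d X (n + 1) - innerR d X n) \<le> card (innerR d X n - innerR d X (n - 1))"
    and R_pos: "R \<ge> 1"
    and Lam_fin: "finite \<Lambda>"
    and Lam_sup: "outerR d X R \<subseteq> \<Lambda>"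
  shows "(SUP r\<in>{-T..T}. norm (K X \<Lambda> \<Psi> r + S d X \<Lambda> \<Psi> R r))
           \<le> 2 * real (card (bdry d X)) * normPsi T F \<xi> d \<Psi> * normF F d * zeta \<xi> (R div 2)"
proof -
  interpret decaying_interaction E F \<xi> T \<Psi>
  proof
    show "(\<lambda>n::nat. \<xi> (real n)) summable_on UNIV"
      by (rule summable_on_nat_if_decay[OF xi_pos xi_decay])
  qed (use graph F_pos F_summ F_bdd xi_pos xi_mono T_pos Psi_cont Psi_summ Psi_bdd in \<open>simp_all add: d_def\<close>)
  define D where "D = {Z. Z \<subseteq> \<Lambda> \<and> Z \<inter> X \<noteq> {} \<and> Z \<inter> (\<Lambda> - X) \<noteq> {} \<and> \<not> Z \<subseteq> bdryR d X (R div 2)}"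
  have "norm (K X \<Lambda> \<Psi> t + S d X \<Lambda> \<Psi> R t)
      \<le> 2 * real (card (bdry d X)) * normPsi T F \<xi> d \<Psi> * normF F d * zeta \<xi> (R div 2)"
    if "t \<in> {-T..T}" for t
  proof -
    have "norm (K X \<Lambda> \<Psi> t + S d X \<Lambda> \<Psi> R t) = norm (\<Sum>Z\<in>D. \<Psi> Z t)"
      unfolding K_add_S_eq[OF Lam_fin Lam_sup] D_def by (rule norm_minus_cancel)
    also have "\<dots> \<le> (\<Sum>Z\<in>D. psup T \<Psi> Z)"
      using that Lam_fin by (intro order.trans[OF norm_sum] sum_mono norm_le_psup)
        (auto simp: D_def intro: finite_subset)
    also have "\<dots> \<le> 2 * real (card (bdry d X)) * normPsi T F \<xi> d \<Psi> * normF F d * zeta \<xi> (R div 2)"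
      unfolding D_def d_def using layers X_fin Lam_fin by (intro sum_psup_off_surface_le) (simp_all add: d_def)
    finally show ?thesis .
  qed
  then show ?thesis
    using T_pos by (intro cSUP_least) auto
qed

end
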